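(* Let $(X,c)$ be a finite metric space and let $R, M \subseteq X$ be nonempty. Let $Q$ be a minimal subset of $R$ such that $c_{\mu Q} = c_{\mu R}$ for all $\mu \in M$. Then for every $x \in X$, $$c_{xQ} \le 2\,c_{xM} + c_{xR}.$$
   Context: For $x\in X$ and a nonempty $F\subseteq X$, $c_{xF} = \min_{f\in F} c_{xf}$ denotes the distance from $x$ to the nearest point of $F$. *)

theory Defs
  imports Complex_Main
begin

definition metric_on :: "'a set \<Rightarrow> ('a \<Rightarrow> 'a \<Rightarrow> real) \<Rightarrow> bool" where
  "metric_on X c \<longleftrightarrow>
     (\<forall>x\<in>X. \<forall>y\<in>X. c x y \<ge> 0) \<and>
     (\<forall>x\<in>X. \<forall>y\<in>X. c x y = 0 \<longleftrightarrow> x = y) \<and>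
     (\<forall>x\<in>X. \<forall>y\<in>X. c x y = c y x) \<and>
     (\<forall>x\<in>X. \<forall>y\<in>X. \<forall>z\<in>X. c x z \<le> c x y + c y z)"

definition setdist_c :: "('a \<Rightarrow> 'a \<Rightarrow> real) \<Rightarrow> 'a \<Rightarrow> 'a set \<Rightarrow> real" where
  "setdist_c c x F = Min (c x ` F)"

end

theory Submission
  imports Defs
begin

text \<open>Pick \<open>\<mu> \<in> M\<close> nearest to \<open>x\<close>. The distance to a set is 1-Lipschitz, so
  \<open>c\<^sub>x\<^sub>Q \<le> c\<^sub>x\<^sub>\<mu> + c\<^sub>\<mu>\<^sub>Q = c\<^sub>x\<^sub>\<mu> + c\<^sub>\<mu>\<^sub>R \<le> 2 c\<^sub>x\<^sub>\<mu> + c\<^sub>x\<^sub>R\<close>.\<close>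

lemma metric_on_sym: "metric_on X c \<Longrightarrow> x \<in> X \<Longrightarrow> y \<in> X \<Longrightarrow> c x y = c y x"
  unfolding metric_on_def by blast

lemma metric_on_triangle:
  "metric_on X c \<Longrightarrow> x \<in> X \<Longrightarrow> y \<in> X \<Longrightarrow> z \<in> X \<Longrightarrow> c x z \<le> c x y + c y z"
  unfolding metric_on_def by blast

lemma setdist_c_le: "finite F \<Longrightarrow> f \<in> F \<Longrightarrow> setdist_c c x F \<le> c x f"
  unfolding setdist_c_def by simp

lemma setdist_c_attained:
  assumes "finite F" and "F \<noteq> {}"
  obtains f where "f \<in> F" and "setdist_c c x F = c x f"
proof -
  have "Min (c x ` F) \<in> c x ` F" using assms by simp
  then show thesis using that unfolding setdist_c_def by blast
qed

lemma setdist_c_le_dist_plus_setdist_c: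
  assumes "metric_on X c" and "finite F" and "F \<noteq> {}" and "F \<subseteq> X"
    and "x \<in> X" and "y \<in> X"
  shows "setdist_c c x F \<le> c x y + setdist_c c y F"
proof -
  obtain f where f: "f \<in> F" "setdist_c c y F = c y f"
    using setdist_c_attained[OF assms(2,3)] .
  have "setdist_c c x F \<le> c x f" using setdist_c_le[OF assms(2) f(1)] .
  also have "\<dots> \<le> c x y + c y f"
    using metric_on_triangle[OF assms(1,5,6)] f(1) assms(4) by blast
  finally show ?thesis using f(2) by simp
qed

theorem lemma2p1:
  fixes X :: "'a set" and c :: "'a \<Rightarrow> 'a \<Rightarrow> real" and R M Q :: "'a set"
  assumes "finite X" and "metric_on X c"
    and "R \<subseteq> X" and "R \<noteq> {}" and "M \<subseteq> X" and "M \<noteq> {}"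
    and "Q \<subseteq> R" and "Q \<noteq> {}"
    and "\<forall>\<mu>\<in>M. setdist_c c \<mu> Q = setdist_c c \<mu> R"
    and "\<forall>Q'. Q' \<subset> Q \<longrightarrow>
           \<not> (Q' \<noteq> {} \<and> (\<forall>\<mu>\<in>M. setdist_c c \<mu> Q' = setdist_c c \<mu> R))"
    and "x \<in> X"
  shows "setdist_c c x Q \<le> 2 * setdist_c c x M + setdist_c c x R"
proof -
  have fin: "finite R" "finite M" "finite Q"
    using assms(1,3,5,7) by (auto intro: finite_subset)
  obtain \<mu> where \<mu>: "\<mu> \<in> M" "setdist_c c x M = c x \<mu>"
    using setdist_c_attained[OF fin(2) assms(6)] .
  have \<mu>X: "\<mu> \<in> X" using \<mu>(1) assms(5) by blast
  have "setdist_c c x Q \<le> c x \<mu> + setdist_c c \<mu> Q"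
    using setdist_c_le_dist_plus_setdist_c[OF assms(2) fin(3) assms(8)] assms(3,7,11) \<mu>X
    by blast
  also have "\<dots> = c x \<mu> + setdist_c c \<mu> R" using assms(9) \<mu>(1) by simp
  also have "\<dots> \<le> c x \<mu> + (c \<mu> x + setdist_c c x R)"
    using setdist_c_le_dist_plus_setdist_c[OF assms(2) fin(1) assms(4,3) \<mu>X assms(11)]
    by simp
  also have "\<dots> = 2 * setdist_c c x M + setdist_c c x R"
    using metric_on_sym[OF assms(2) \<mu>X assms(11)] \<mu>(2) by simp
  finally show ?thesis .
qed

end
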